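(* Let $N_1,N_2$ be continuous fuzzy negations and $U_1,U_2$ disjunctive uninorms with neutral elements $e_1,e_2\in\,]0,1[$ respectively, and suppose $U_1(N_1(x),y)=U_2(N_2(x),y)$ for all $x,y\in[0,1]$. If $e_1\neq e_2$ or $N_1\neq N_2$ or $U_1\neq U_2$, then: (i) $e_1\neq e_2$, $N_1\neq N_2$ and $U_1\neq U_2$; (ii) the function $f_1:[0,1]\to[0,1]$, $f_1(x)=U_1(x,e_2)$, is continuous and non-decreasing with $f_1(0)=0$ and $f_1(1)=1$; (iii) the function $f_2:[0,1]\to[0,1]$, $f_2(x)=U_2(x,e_1)$, is continuous and non-decreasing with $f_2(0)=0$ and $f_2(1)=1$.
   Context: A fuzzy negation is a non-increasing map $N:[0,1]\to[0,1]$ with $N(0)=1$, $N(1)=0$. A uninorm is a map $U:[0,1]^2\to[0,1]$ that is commutative, associative, non-decreasing in each variable, and has a neutral element $e\in[0,1]$. A uninorm is disjunctive if $U(1,0)=1$. *)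

theory Defs
  imports "HOL-Analysis.Analysis"
begin

definition fuzzy_negation :: "(real \<Rightarrow> real) \<Rightarrow> bool" where
  "fuzzy_negation N \<longleftrightarrow>
     (\<forall>x\<in>{0..1}. N x \<in> {0..1}) \<and>
     (\<forall>x\<in>{0..1}. \<forall>y\<in>{0..1}. x \<le> y \<longrightarrow> N y \<le> N x) \<and>
     N 0 = 1 \<and> N 1 = 0"

definition uninorm :: "(real \<Rightarrow> real \<Rightarrow> real) \<Rightarrow> real \<Rightarrow> bool" where
  "uninorm U e \<longleftrightarrow>
     e \<in> {0..1} \<and>
     (\<forall>x\<in>{0..1}. \<forall>y\<in>{0..1}. U x y \<in> {0..1}) \<and>
     (\<forall>x\<in>{0..1}. \<forall>y\<in>{0..1}. U x y = U y x) \<and>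
     (\<forall>x\<in>{0..1}. \<forall>y\<in>{0..1}. \<forall>z\<in>{0..1}. U (U x y) z = U x (U y z)) \<and>
     (\<forall>x\<in>{0..1}. \<forall>x'\<in>{0..1}. \<forall>y\<in>{0..1}. \<forall>y'\<in>{0..1}.
        x \<le> x' \<longrightarrow> y \<le> y' \<longrightarrow> U x y \<le> U x' y') \<and>
     (\<forall>x\<in>{0..1}. U x e = x \<and> U e x = x)"

definition disjunctive_uninorm :: "(real \<Rightarrow> real \<Rightarrow> real) \<Rightarrow> real \<Rightarrow> bool" where
  "disjunctive_uninorm U e \<longleftrightarrow> uninorm U e \<and> U 1 0 = 1"

end

theory Submission
  imports Defs
begin

(* Putting y = e2 gives U1 (N1 x) e2 = N2 x, so the section
   x \<mapsto> U1 x e2 is monotone and, N2 being continuous, maps [0,1] onto [0,1];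
   a monotone map of an interval onto an interval is continuous.  For (i), the
   three equalities e1 = e2, N1 = N2 and U1 = U2 imply each other cyclically:
   put y = e1 = e2; use that N1 is onto [0,1]; evaluate at (e1, e2).  So if one
   of them fails, all of them fail. *)

lemma continuous_on_mono_onto_interval:
  fixes f :: "real \<Rightarrow> real"
  assumes "a \<le> b" and mono: "mono_on {a..b} f" and onto: "{f a..f b} \<subseteq> f ` {a..b}"
  shows "continuous_on {a..b} f"
proof -
  \<comment> \<open>extended with slope 1 outside [a,b], f becomes a monotone map of the reals onto the reals\<close>
  define g where
    "g x = (if x < a then f a + (x - a) else if b < x then f b + (x - b) else f x)" for x
  have g_mono: "g x \<le> g y" if "x \<le> y" for x y
    using that \<open>a \<le> b\<close> mono_onD[OF mono, of a x] mono_onD[OF mono, of x y]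
      mono_onD[OF mono, of y b] mono_onD[OF mono, of a y] mono_onD[OF mono, of x b]
      mono_onD[OF mono, of a b]
    unfolding g_def by auto
  have "y \<in> range g" for y
  proof -
    consider "y < f a" | "f b < y" | "y \<in> {f a..f b}" by force
    then show ?thesis
    proof cases
      case 1
      then have "g (a + (y - f a)) = y" by (simp add: g_def)
      then show ?thesis by (metis rangeI)
    next
      case 2
      with \<open>a \<le> b\<close> mono_onD[OF mono, of a b] have "g (b + (y - f b)) = y"
        by (simp add: g_def)
      then show ?thesis by (metis rangeI)
    next
      case 3
      then obtain x where "x \<in> {a..b}" "f x = y" using onto by auto
      then have "g x = y" by (simp add: g_def)
      then show ?thesis by (metis rangeI)
    qed
  qed
  then have "range g = UNIV" by auto
  then have "continuous_on UNIV g"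
    by (intro continuous_onI_mono) (auto intro: g_mono)
  then have "continuous_on {a..b} g" by (rule continuous_on_subset) simp
  then show ?thesis by (rule continuous_on_cong[THEN iffD1, rotated 2]) (simp_all add: g_def)
qed

lemma fuzzy_negation_closed:
  "fuzzy_negation N \<Longrightarrow> x \<in> {0..1} \<Longrightarrow> N x \<in> {0..1}"
  unfolding fuzzy_negation_def by auto

lemma fuzzy_negation_onto:
  assumes "fuzzy_negation N" and "continuous_on {0..1} N" and "a \<in> {0..1}"
  shows "\<exists>x\<in>{0..1}. N x = a"
proof -
  have "N 1 \<le> a" "a \<le> N 0" using assms unfolding fuzzy_negation_def by auto
  from IVT2'[OF this _ assms(2)] show ?thesis by auto
qed

lemma uninorm_neutral_closed: "uninorm U e \<Longrightarrow> e \<in> {0..1}"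
  unfolding uninorm_def by auto

lemma uninorm_closed:
  "uninorm U e \<Longrightarrow> x \<in> {0..1} \<Longrightarrow> y \<in> {0..1} \<Longrightarrow> U x y \<in> {0..1}"
  unfolding uninorm_def by auto

lemma uninorm_mono:
  "uninorm U e \<Longrightarrow> x \<in> {0..1} \<Longrightarrow> x' \<in> {0..1} \<Longrightarrow> y \<in> {0..1} \<Longrightarrow> y' \<in> {0..1}
    \<Longrightarrow> x \<le> x' \<Longrightarrow> y \<le> y' \<Longrightarrow> U x y \<le> U x' y'"
  unfolding uninorm_def by blast

lemma uninorm_right_neutral: "uninorm U e \<Longrightarrow> x \<in> {0..1} \<Longrightarrow> U x e = x"
  unfolding uninorm_def by blast

lemma uninorm_left_neutral: "uninorm U e \<Longrightarrow> x \<in> {0..1} \<Longrightarrow> U e x = x"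
  unfolding uninorm_def by blast

lemma uninorm_neutral_unique:
  assumes "uninorm U1 e1" and "uninorm U2 e2"
    and "\<forall>x\<in>{0..1}. \<forall>y\<in>{0..1}. U1 x y = U2 x y"
  shows "e1 = e2"
proof -
  have e1: "e1 \<in> {0..1}" and e2: "e2 \<in> {0..1}"
    using assms(1,2) by (blast intro: uninorm_neutral_closed)+
  have "e2 = U1 e1 e2" using uninorm_left_neutral[OF assms(1) e2] ..
  also have "\<dots> = U2 e1 e2" using assms(3) e1 e2 by simp
  also have "\<dots> = e1" using uninorm_right_neutral[OF assms(2) e1] .
  finally show ?thesis by simp
qed

lemma negations_eq_if_same_neutral:
  assumes "uninorm U1 e" and "uninorm U2 e"
    and "fuzzy_negation N1" and "fuzzy_negation N2"
    and eq: "\<forall>x\<in>{0..1}. \<forall>y\<in>{0..1}. U1 (N1 x) y = U2 (N2 x) y"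
  shows "\<forall>x\<in>{0..1}. N1 x = N2 x"
proof
  fix x :: real assume x: "x \<in> {0..1}"
  have "N1 x = U1 (N1 x) e"
    using uninorm_right_neutral[OF assms(1) fuzzy_negation_closed[OF assms(3) x]] ..
  also have "\<dots> = U2 (N2 x) e" using eq x uninorm_neutral_closed[OF assms(1)] by simp
  also have "\<dots> = N2 x"
    using uninorm_right_neutral[OF assms(2) fuzzy_negation_closed[OF assms(4) x]] .
  finally show "N1 x = N2 x" .
qed

lemma uninorms_eq_if_same_negation:
  assumes "fuzzy_negation N" and "continuous_on {0..1} N"
    and eq: "\<forall>x\<in>{0..1}. \<forall>y\<in>{0..1}. U1 (N x) y = U2 (N x) y"
  shows "\<forall>x\<in>{0..1}. \<forall>y\<in>{0..1}. U1 x y = U2 x y"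
  using eq fuzzy_negation_onto[OF assms(1,2)] by metis

lemma section_at_other_neutral:
  assumes "uninorm U1 e1" and "uninorm U2 e2"
    and "fuzzy_negation N1" and "fuzzy_negation N2" and "continuous_on {0..1} N2"
    and eq: "\<forall>x\<in>{0..1}. \<forall>y\<in>{0..1}. U1 (N1 x) y = U2 (N2 x) y"
  shows "continuous_on {0..1} (\<lambda>x. U1 x e2) \<and> mono_on {0..1} (\<lambda>x. U1 x e2)
    \<and> (\<forall>x\<in>{0..1}. U1 x e2 \<in> {0..1}) \<and> U1 0 e2 = 0 \<and> U1 1 e2 = 1"
proof -
  have e2: "e2 \<in> {0..1}" using assms(2) by (rule uninorm_neutral_closed)
  have section_neg: "U1 (N1 x) e2 = N2 x" if "x \<in> {0..1}" for x
    using eq that e2 uninorm_right_neutral[OF assms(2) fuzzy_negation_closed[OF assms(4) that]]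
    by simp
  have closed: "\<forall>x\<in>{0..1}. U1 x e2 \<in> {0..1}" using uninorm_closed[OF assms(1) _ e2] by blast
  have mono: "mono_on {0..1} (\<lambda>x. U1 x e2)"
    using assms(1) e2 by (intro mono_onI) (simp add: uninorm_mono)
  have at_0: "U1 0 e2 = 0" and at_1: "U1 1 e2 = 1"
    using section_neg[of 1] section_neg[of 0] assms(3,4) unfolding fuzzy_negation_def by auto
  have "{0..1} \<subseteq> (\<lambda>x. U1 x e2) ` {0..1}"
  proof
    fix b :: real assume "b \<in> {0..1}"
    then obtain x where x: "x \<in> {0..1}" "N2 x = b" using fuzzy_negation_onto assms(4,5) by blast
    then have "U1 (N1 x) e2 = b" by (simp add: section_neg)
    with x(1) assms(3) show "b \<in> (\<lambda>x. U1 x e2) ` {0..1}" by (metis fuzzy_negation_closed imageI)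
  qed
  then have "continuous_on {0..1} (\<lambda>x. U1 x e2)"
    using at_0 at_1 by (intro continuous_on_mono_onto_interval mono) simp_all
  then show ?thesis using mono closed at_0 at_1 by blast
qed

theorem mainTheorem3:
  fixes N1 N2 :: "real \<Rightarrow> real" and U1 U2 :: "real \<Rightarrow> real \<Rightarrow> real" and e1 e2 :: real
  assumes "fuzzy_negation N1" and "continuous_on {0..1} N1"
    and "fuzzy_negation N2" and "continuous_on {0..1} N2"
    and "disjunctive_uninorm U1 e1" and "e1 \<in> {0<..<1}"
    and "disjunctive_uninorm U2 e2" and "e2 \<in> {0<..<1}"
    and "\<forall>x\<in>{0..1}. \<forall>y\<in>{0..1}. U1 (N1 x) y = U2 (N2 x) y"
    and "e1 \<noteq> e2 \<or> (\<exists>x\<in>{0..1}. N1 x \<noteq> N2 x)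
         \<or> (\<exists>x\<in>{0..1}. \<exists>y\<in>{0..1}. U1 x y \<noteq> U2 x y)"
  shows "(e1 \<noteq> e2 \<and> (\<exists>x\<in>{0..1}. N1 x \<noteq> N2 x)
            \<and> (\<exists>x\<in>{0..1}. \<exists>y\<in>{0..1}. U1 x y \<noteq> U2 x y))
      \<and> (continuous_on {0..1} (\<lambda>x. U1 x e2) \<and> mono_on {0..1} (\<lambda>x. U1 x e2)
            \<and> (\<forall>x\<in>{0..1}. U1 x e2 \<in> {0..1}) \<and> U1 0 e2 = 0 \<and> U1 1 e2 = 1)
      \<and> (continuous_on {0..1} (\<lambda>x. U2 x e1) \<and> mono_on {0..1} (\<lambda>x. U2 x e1)
            \<and> (\<forall>x\<in>{0..1}. U2 x e1 \<in> {0..1}) \<and> U2 0 e1 = 0 \<and> U2 1 e1 = 1)"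
proof -
  have u1: "uninorm U1 e1" and u2: "uninorm U2 e2"
    using assms(5,7) unfolding disjunctive_uninorm_def by blast+
  note eq = assms(9)
  have eq': "\<forall>x\<in>{0..1}. \<forall>y\<in>{0..1}. U2 (N2 x) y = U1 (N1 x) y" using eq by simp
  have "e1 = e2 \<Longrightarrow> \<forall>x\<in>{0..1}. N1 x = N2 x"
    using negations_eq_if_same_neutral[OF _ _ assms(1,3) eq] u1 u2 by blast
  moreover have "\<forall>x\<in>{0..1}. N1 x = N2 x \<Longrightarrow> \<forall>x\<in>{0..1}. \<forall>y\<in>{0..1}. U1 x y = U2 x y"
    using uninorms_eq_if_same_negation[OF assms(1,2)] eq by simp
  moreover have "\<forall>x\<in>{0..1}. \<forall>y\<in>{0..1}. U1 x y = U2 x y \<Longrightarrow> e1 = e2"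
    using uninorm_neutral_unique[OF u1 u2] .
  ultimately show ?thesis
    using assms(10) section_at_other_neutral[OF u1 u2 assms(1,3,4) eq]
      section_at_other_neutral[OF u2 u1 assms(3,1,2) eq'] by blast
qed

end
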